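(* Let $P=\{S_1,\ldots,S_n\}$ be a homothetic packing of $n$ squares with contact graph $G=([n],E)$. Let $\{i,j\}\in E$ and let $$p_{ij}=\left(x_i-\frac{r_i(x_i-x_j)}{r_i+r_j},\ y_i-\frac{r_i(y_i-y_j)}{r_i+r_j}\right).$$ Then: (1) the closed segment $[p_i,p_j]=\{tp_i+(1-t)p_j:t\in[0,1]\}$ is contained in $S_i\cup S_j$; (2) $[p_i,p_j]\setminus\{p_{ij}\}$ is contained in $S_i^\circ\cup S_j^\circ$; (3) $p_{ij}$ lies in the interior of $S_i\cup S_j$ if and only if $\{i,j\}\notin E_x\cap E_y$.
   Context: Let $S=\{(x,y): -1\le x,y\le 1\}$. A homothetic packing of $n$ squares is a set $P=\{S_1,\ldots,S_n\}$ with $S_i=r_iS+p_i$, $r_i>0$, $p_i=(x_i,y_i)\in\mathbb{R}^2$, such that distinct squares have disjoint interiors; $A^\circ$ denotes the interior of $A$. Its contact graph is $G=([n],E)$ where $\{i,j\}\in E$ iff $i\ne j$ and $S_i\cap S_j\ne\emptyset$. $E_x$ is the set of pairs $\{i,j\}\in E$ with $r_i+r_j=|x_i-x_j|\ge|y_i-y_j|$, and $E_y$ the set with $r_i+r_j=|y_i-y_j|\ge|x_i-x_j|$. *)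

theory Defs
  imports "HOL-Analysis.Analysis"
begin

definition unit_sq :: "(real \<times> real) set" where
  "unit_sq = {(x, y). -1 \<le> x \<and> x \<le> 1 \<and> -1 \<le> y \<and> y \<le> 1}"

definition hsq :: "real \<Rightarrow> real \<times> real \<Rightarrow> (real \<times> real) set" where
  "hsq r p = (\<lambda>v. r *\<^sub>R v + p) ` unit_sq"

definition homothetic_packing ::
  "nat \<Rightarrow> (nat \<Rightarrow> real) \<Rightarrow> (nat \<Rightarrow> real \<times> real) \<Rightarrow> bool" where
  "homothetic_packing n r p \<longleftrightarrow>
     (\<forall>i\<in>{1..n}. r i > 0) \<and>
     (\<forall>i\<in>{1..n}. \<forall>j\<in>{1..n}. i \<noteq> j \<longrightarrow>
        interior (hsq (r i) (p i)) \<inter> interior (hsq (r j) (p j)) = {})"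

definition contact_edges ::
  "nat \<Rightarrow> (nat \<Rightarrow> real) \<Rightarrow> (nat \<Rightarrow> real \<times> real) \<Rightarrow> nat set set" where
  "contact_edges n r p = {{i, j} | i j. i \<in> {1..n} \<and> j \<in> {1..n} \<and> i \<noteq> j \<and>
       hsq (r i) (p i) \<inter> hsq (r j) (p j) \<noteq> {}}"

definition edges_x ::
  "nat \<Rightarrow> (nat \<Rightarrow> real) \<Rightarrow> (nat \<Rightarrow> real \<times> real) \<Rightarrow> nat set set" where
  "edges_x n r p = {{i, j} | i j. {i, j} \<in> contact_edges n r p \<and>
       r i + r j = \<bar>fst (p i) - fst (p j)\<bar> \<and>
       \<bar>fst (p i) - fst (p j)\<bar> \<ge> \<bar>snd (p i) - snd (p j)\<bar>}"

definition edges_y ::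
  "nat \<Rightarrow> (nat \<Rightarrow> real) \<Rightarrow> (nat \<Rightarrow> real \<times> real) \<Rightarrow> nat set set" where
  "edges_y n r p = {{i, j} | i j. {i, j} \<in> contact_edges n r p \<and>
       r i + r j = \<bar>snd (p i) - snd (p j)\<bar> \<and>
       \<bar>snd (p i) - snd (p j)\<bar> \<ge> \<bar>fst (p i) - fst (p j)\<bar>}"

end

theory Submission
  imports Defs
begin

text \<open>
  In the maximum norm the square \<open>hsq r p\<close> is the closed ball of radius \<open>r\<close> about \<open>p\<close>.
  Hence two squares of a packing that touch have centres at \<open>infnorm\<close>-distance exactly
  \<open>D = r\<^sub>i + r\<^sub>j\<close>: at most \<open>D\<close> because they meet, at least \<open>D\<close> because otherwise the point
  \<open>p\<^sub>i\<^sub>j\<close> dividing \<open>[p\<^sub>i, p\<^sub>j]\<close> in the ratio \<open>r\<^sub>i : r\<^sub>j\<close> would lie in both interiors.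
  A point of the segment at distance \<open>u D\<close> from \<open>p\<^sub>i\<close> is at distance \<open>(1 - u) D\<close>
  from \<open>p\<^sub>j\<close>, which gives (1), and (2) because both distances are at least the radii
  only at \<open>p\<^sub>i\<^sub>j\<close>. For (3), in each coordinate the two side intervals of the squares
  overlap or abut at \<open>p\<^sub>i\<^sub>j\<close>, so the union contains a product neighbourhood of \<open>p\<^sub>i\<^sub>j\<close>
  unless the intervals abut in both coordinates, i.e. unless \<open>p\<^sub>i\<^sub>j\<close> is a common corner.
\<close>

lemma infnorm_Pair: "infnorm (a, b) = max \<bar>a\<bar> \<bar>b::real\<bar>"
  by (simp add: infnorm_Max Basis_prod_def max_def)

lemma hsq_eq_Times:
  assumes "0 \<le> r"
  shows "hsq r p = {fst p - r..fst p + r} \<times> {snd p - r..snd p + r}"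
proof
  show "hsq r p \<subseteq> {fst p - r..fst p + r} \<times> {snd p - r..snd p + r}"
  proof
    fix q assume "q \<in> hsq r p"
    then obtain a b where ab: "\<bar>a\<bar> \<le> 1" "\<bar>b\<bar> \<le> 1" "q = r *\<^sub>R (a, b) + p"
      unfolding hsq_def unit_sq_def by (auto simp: abs_le_iff)
    have "\<bar>r * a\<bar> \<le> r" "\<bar>r * b\<bar> \<le> r"
      using ab assms by (auto simp: abs_mult intro!: mult_left_le)
    then show "q \<in> {fst p - r..fst p + r} \<times> {snd p - r..snd p + r}"
      using ab(3) by (cases p) (auto simp: abs_le_iff)
  qed
next
  show "{fst p - r..fst p + r} \<times> {snd p - r..snd p + r} \<subseteq> hsq r p"
  proof
    fix q assume q: "q \<in> {fst p - r..fst p + r} \<times> {snd p - r..snd p + r}"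
    define v where "v = (1 / r) *\<^sub>R (q - p)"
    have "q = r *\<^sub>R v + p"
      using q by (cases "r = 0") (auto simp: v_def prod_eq_iff)
    moreover have "v \<in> unit_sq"
      using q assms by (cases p; cases q; cases "r = 0")
        (auto simp: v_def unit_sq_def zero_prod_def field_simps)
    ultimately show "q \<in> hsq r p" unfolding hsq_def by blast
  qed
qed

lemma mem_hsq_iff: "0 \<le> r \<Longrightarrow> q \<in> hsq r p \<longleftrightarrow> infnorm (q - p) \<le> r"
  by (cases p; cases q) (auto simp: hsq_eq_Times infnorm_Pair abs_le_iff)

lemma mem_interior_hsq_iff: "0 \<le> r \<Longrightarrow> q \<in> interior (hsq r p) \<longleftrightarrow> infnorm (q - p) < r"
  by (cases p; cases q) (auto simp: hsq_eq_Times interior_Times infnorm_Pair abs_less_iff)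

lemma divide_mult_le_self:
  fixes r d x :: real
  assumes "0 \<le> r" "0 < d" "x \<le> d"
  shows "r / d * x \<le> r"
  using mult_left_mono[OF assms(3,1)] assms(2) by (simp add: field_simps)

lemma divide_mult_less_self:
  fixes r d x :: real
  assumes "0 < r" "0 < d" "x < d"
  shows "r / d * x < r"
  using mult_strict_left_mono[OF assms(3,1)] assms(2) by (simp add: field_simps)

definition touch_point :: "real \<Rightarrow> 'a::real_vector \<Rightarrow> real \<Rightarrow> 'a \<Rightarrow> 'a" where
  "touch_point r p s q = p + (r / (r + s)) *\<^sub>R (q - p)"

lemma infnorm_touch_point:
  assumes "0 < r" "0 < s"
  shows "infnorm (touch_point r p s q - p) = r / (r + s) * infnorm (q - p)"
    and "infnorm (touch_point r p s q - q) = s / (r + s) * infnorm (q - p)"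
proof -
  have "touch_point r p s q - q = (r / (r + s) - 1) *\<^sub>R (q - p)"
    by (simp add: touch_point_def algebra_simps)
  moreover have "\<bar>r / (r + s) - 1\<bar> = s / (r + s)"
    using assms by (simp add: field_simps)
  ultimately show "infnorm (touch_point r p s q - q) = s / (r + s) * infnorm (q - p)"
    by (simp add: infnorm_mul)
qed (use assms in \<open>simp add: touch_point_def infnorm_mul\<close>)

lemma hsq_Int_nonempty_infnorm_le:
  assumes "0 \<le> r" "0 \<le> s" "hsq r p \<inter> hsq s q \<noteq> {}"
  shows "infnorm (q - p) \<le> r + s"
proof -
  obtain z where "infnorm (z - p) \<le> r" "infnorm (z - q) \<le> s"
    using assms by (auto simp: mem_hsq_iff)
  moreover have "infnorm (q - p) \<le> infnorm (z - p) + infnorm (q - z)"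
    using infnorm_triangle[of "z - p" "q - z"] by simp
  ultimately show ?thesis by (simp add: infnorm_sub[of q])
qed

lemma touch_point_in_interior_hsq_Int:
  assumes "0 < r" "0 < s" "infnorm (q - p) < r + s"
  shows "touch_point r p s q \<in> interior (hsq r p) \<inter> interior (hsq s q)"
proof -
  have "r / (r + s) * infnorm (q - p) < r" "s / (r + s) * infnorm (q - p) < s"
    using assms by (simp_all add: divide_mult_less_self del: times_divide_eq_left)
  then show ?thesis
    using assms by (simp add: mem_interior_hsq_iff infnorm_touch_point)
qed

lemma touching_hsq_infnorm:
  assumes "0 < r" "0 < s" "hsq r p \<inter> hsq s q \<noteq> {}"
    and "interior (hsq r p) \<inter> interior (hsq s q) = {}"
  shows "infnorm (q - p) = r + s"
  using hsq_Int_nonempty_infnorm_le[of r s p q] touch_point_in_interior_hsq_Int[of r s q p] assms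
  by fastforce

lemma closed_segment_infnorm:
  assumes "x \<in> closed_segment p q"
  obtains u where "x = p + u *\<^sub>R (q - p)"
    "infnorm (x - p) = u * infnorm (q - p)" "infnorm (x - q) = (1 - u) * infnorm (q - p)"
proof -
  obtain u where u: "0 \<le> u" "u \<le> 1" "x = p + u *\<^sub>R (q - p)"
    using assms by (auto simp: in_segment algebra_simps)
  moreover have "x - q = (1 - u) *\<^sub>R (p - q)"
    using u(3) by (simp add: algebra_simps)
  ultimately show thesis
    by (intro that[of u]) (simp_all add: infnorm_mul infnorm_sub[of p])
qed

lemma closed_segment_subset_hsq_Un:
  assumes "0 \<le> r" "0 \<le> s" "infnorm (q - p) \<le> r + s"
  shows "closed_segment p q \<subseteq> hsq r p \<union> hsq s q"
proof
  fix x assume "x \<in> closed_segment p q"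
  then obtain u where
    "infnorm (x - p) = u * infnorm (q - p)" "infnorm (x - q) = (1 - u) * infnorm (q - p)"
    by (rule closed_segment_infnorm)
  then have "infnorm (x - p) + infnorm (x - q) \<le> r + s"
    using assms(3) by (simp add: algebra_simps)
  then show "x \<in> hsq r p \<union> hsq s q"
    using assms by (auto simp: mem_hsq_iff)
qed

lemma closed_segment_minus_touch_point_subset_interior:
  assumes "0 < r" "0 < s" "infnorm (q - p) \<le> r + s"
  shows "closed_segment p q - {touch_point r p s q} \<subseteq> interior (hsq r p) \<union> interior (hsq s q)"
proof
  fix x assume x: "x \<in> closed_segment p q - {touch_point r p s q}"
  then obtain u where u: "x = p + u *\<^sub>R (q - p)"
    "infnorm (x - p) = u * infnorm (q - p)" "infnorm (x - q) = (1 - u) * infnorm (q - p)"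
    using closed_segment_infnorm by blast
  show "x \<in> interior (hsq r p) \<union> interior (hsq s q)"
  proof (rule ccontr)
    assume "x \<notin> interior (hsq r p) \<union> interior (hsq s q)"
    then have "r \<le> u * infnorm (q - p)" "s \<le> (1 - u) * infnorm (q - p)"
      using assms u by (auto simp: mem_interior_hsq_iff)
    then have "infnorm (q - p) = r + s"
      using assms(3) by (simp add: algebra_simps)
    then have "u * (r + s) = r"
      using \<open>r \<le> u * infnorm (q - p)\<close> \<open>s \<le> (1 - u) * infnorm (q - p)\<close>
      by (simp add: algebra_simps)
    then have "x = touch_point r p s q"
      using assms u(1) by (simp add: touch_point_def eq_divide_eq)
    then show False
      using x by blast
  qed
qed

lemma touch_coordinate_in_interior_Un:
  fixes a b r s :: real
  assumes "0 < r" "0 < s" "\<bar>b - a\<bar> \<le> r + s"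
  shows "a + r / (r + s) * (b - a) \<in> interior ({a - r..a + r} \<union> {b - s..b + s})"
proof -
  define c where "c = a + r / (r + s) * (b - a)"
  have c_a: "c - a = r / (r + s) * (b - a)" and b_c: "b - c = s / (r + s) * (b - a)"
    using assms by (simp_all add: c_def field_simps)
  moreover have "r / (r + s) * \<bar>b - a\<bar> \<le> r" "s / (r + s) * \<bar>b - a\<bar> \<le> s"
    using assms by (simp_all add: divide_mult_le_self del: times_divide_eq_left)
  ultimately have "\<bar>c - a\<bar> \<le> r" "\<bar>b - c\<bar> \<le> s"
    using assms by (simp_all add: abs_mult del: times_divide_eq_left)
  moreover have "a \<le> c \<and> c \<le> b \<or> b \<le> c \<and> c \<le> a"
  proof (cases "a \<le> b")
    case True
    then have "0 \<le> r / (r + s) * (b - a)" "0 \<le> s / (r + s) * (b - a)"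
      using assms by simp_all
    then show ?thesis
      using c_a b_c by simp
  next
    case False
    then have "r / (r + s) * (b - a) \<le> 0" "s / (r + s) * (b - a) \<le> 0"
      using assms by (simp_all add: divide_nonpos_pos mult_nonneg_nonpos)
    then show ?thesis
      using c_a b_c by simp
  qed
  ultimately have "{c - min r s<..<c + min r s} \<subseteq> {a - r..a + r} \<union> {b - s..b + s}"
    by auto
  moreover have "c \<in> {c - min r s<..<c + min r s}"
    using assms by simp
  ultimately show ?thesis
    unfolding c_def[symmetric] by (meson interiorI open_greaterThanLessThan)
qed

lemma touch_coordinate_in_interior_Int:
  fixes a b r s :: real
  assumes "0 < r" "0 < s" "\<bar>b - a\<bar> < r + s"
  shows "a + r / (r + s) * (b - a) \<in> interior ({a - r..a + r} \<inter> {b - s..b + s})"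
proof -
  define c where "c = a + r / (r + s) * (b - a)"
  have "c - a = r / (r + s) * (b - a)" "b - c = s / (r + s) * (b - a)"
    using assms by (simp_all add: c_def field_simps)
  moreover have "r / (r + s) * \<bar>b - a\<bar> < r" "s / (r + s) * \<bar>b - a\<bar> < s"
    using assms by (simp_all add: divide_mult_less_self del: times_divide_eq_left)
  ultimately have "\<bar>c - a\<bar> < r" "\<bar>b - c\<bar> < s"
    using assms by (simp_all add: abs_mult)
  then show ?thesis
    unfolding c_def[symmetric] by (auto simp: abs_less_iff)
qed

lemma touch_point_Pair:
  "touch_point r (a1, a2) s (b1, b2) = (a1 + r / (r + s) * (b1 - a1), a2 + r / (r + s) * (b2 - a2))"
  by (simp add: touch_point_def)

lemma touch_point_in_interior_hsq_Un:
  assumes "0 < r" "0 < s" "infnorm (q - p) \<le> r + s"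
    and "\<bar>fst q - fst p\<bar> < r + s \<or> \<bar>snd q - snd p\<bar> < r + s"
  shows "touch_point r p s q \<in> interior (hsq r p \<union> hsq s q)"
proof -
  obtain a1 a2 b1 b2 where pq: "p = (a1, a2)" "q = (b1, b2)"
    by fastforce
  define I where "I c t = {c - t..c + t}" for c t :: real
  have hsq: "hsq r p = I a1 r \<times> I a2 r" "hsq s q = I b1 s \<times> I b2 s"
    using assms pq by (simp_all add: hsq_eq_Times I_def)
  have "\<bar>b1 - a1\<bar> \<le> r + s" "\<bar>b2 - a2\<bar> \<le> r + s"
    using assms(3) pq by (simp_all add: infnorm_Pair)
  then have Un: "a1 + r / (r + s) * (b1 - a1) \<in> interior (I a1 r \<union> I b1 s)"
      "a2 + r / (r + s) * (b2 - a2) \<in> interior (I a2 r \<union> I b2 s)"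
    using assms(1,2) by (metis I_def touch_coordinate_in_interior_Un)+
  have Int: "\<bar>b - a\<bar> < r + s \<Longrightarrow> a + r / (r + s) * (b - a) \<in> interior (I a r \<inter> I b s)" for a b
    using assms(1,2) by (metis I_def touch_coordinate_in_interior_Int)
  have "touch_point r p s q \<in> interior ((I a1 r \<union> I b1 s) \<times> (I a2 r \<inter> I b2 s))
      \<union> interior ((I a1 r \<inter> I b1 s) \<times> (I a2 r \<union> I b2 s))"
    using assms(4) Un Int pq by (auto simp: interior_Times touch_point_Pair simp del: interior_Int)
  moreover have "(I a1 r \<union> I b1 s) \<times> (I a2 r \<inter> I b2 s) \<subseteq> hsq r p \<union> hsq s q"
      "(I a1 r \<inter> I b1 s) \<times> (I a2 r \<union> I b2 s) \<subseteq> hsq r p \<union> hsq s q"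
    unfolding hsq by auto
  ultimately show ?thesis
    using interior_mono by blast
qed

lemma touch_point_not_in_interior_hsq_Un:
  assumes "0 < r" "0 < s" "\<bar>fst q - fst p\<bar> = r + s" "\<bar>snd q - snd p\<bar> = r + s"
  shows "touch_point r p s q \<notin> interior (hsq r p \<union> hsq s q)"
proof
  assume "touch_point r p s q \<in> interior (hsq r p \<union> hsq s q)"
  then obtain e where "0 < e" and ball: "ball (touch_point r p s q) e \<subseteq> hsq r p \<union> hsq s q"
    by (auto simp: mem_interior)
  define \<sigma>\<^sub>1 \<sigma>\<^sub>2 where "\<sigma>\<^sub>1 = sgn (fst q - fst p)" and "\<sigma>\<^sub>2 = sgn (snd q - snd p)"
  \<comment> \<open>\<open>z\<close> leaves the first square horizontally and the second one vertically\<close>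
  define z where "z = touch_point r p s q + (e / 3) *\<^sub>R (\<sigma>\<^sub>1, - \<sigma>\<^sub>2)"
  have \<sigma>: "\<bar>\<sigma>\<^sub>1\<bar> = 1" "\<bar>\<sigma>\<^sub>2\<bar> = 1"
      "fst q - fst p = (r + s) * \<sigma>\<^sub>1" "snd q - snd p = (r + s) * \<sigma>\<^sub>2"
    using assms abs_mult_sgn[of "fst q - fst p"] abs_mult_sgn[of "snd q - snd p"]
    by (auto simp: \<sigma>\<^sub>1_def \<sigma>\<^sub>2_def)
  have "dist z (touch_point r p s q) \<le> e / 3 + e / 3"
    using norm_Pair_le[of "e / 3 * \<sigma>\<^sub>1" "- (e / 3 * \<sigma>\<^sub>2)"] \<sigma> \<open>0 < e\<close>
    by (simp add: z_def dist_norm abs_mult)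
  then have "z \<in> ball (touch_point r p s q) e"
    using \<open>0 < e\<close> by (simp add: dist_commute)
  then have "z \<in> hsq r p \<union> hsq s q"
    using ball by blast
  moreover have "touch_point r p s q = p + r *\<^sub>R (\<sigma>\<^sub>1, \<sigma>\<^sub>2)"
  proof -
    have "q - p = (r + s) *\<^sub>R (\<sigma>\<^sub>1, \<sigma>\<^sub>2)"
      using \<sigma> by (simp add: prod_eq_iff)
    then show ?thesis
      using assms by (simp add: touch_point_def)
  qed
  then have "fst z - fst p = (r + e / 3) * \<sigma>\<^sub>1" "snd z - snd q = - (s + e / 3) * \<sigma>\<^sub>2"
    using \<sigma> by (simp_all add: z_def algebra_simps)
  then have "r < \<bar>fst z - fst p\<bar>" "s < \<bar>snd z - snd q\<bar>"
    using \<sigma> \<open>0 < e\<close> assms by (simp_all add: abs_mult)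
  ultimately show False
    using assms by (auto simp: hsq_eq_Times)
qed

lemma touch_point_in_interior_hsq_Un_iff:
  assumes "0 < r" "0 < s" "infnorm (q - p) \<le> r + s"
  shows "touch_point r p s q \<in> interior (hsq r p \<union> hsq s q)
    \<longleftrightarrow> \<not> (\<bar>fst q - fst p\<bar> = r + s \<and> \<bar>snd q - snd p\<bar> = r + s)"
proof -
  have "\<bar>fst q - fst p\<bar> \<le> r + s" "\<bar>snd q - snd p\<bar> \<le> r + s"
    using assms(3) by (cases p; cases q; simp add: infnorm_Pair)+
  then show ?thesis
    using touch_point_in_interior_hsq_Un[OF assms] touch_point_not_in_interior_hsq_Un[OF assms(1,2)]
    by fastforce
qed

lemma contact_edgesD:
  assumes "{i, j} \<in> contact_edges n r p"
  shows "i \<in> {1..n}" "j \<in> {1..n}" "i \<noteq> j" "hsq (r i) (p i) \<inter> hsq (r j) (p j) \<noteq> {}"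
  using assms unfolding contact_edges_def by (auto simp: doubleton_eq_iff)

lemma contact_edge_infnorm:
  assumes "homothetic_packing n r p" "{i, j} \<in> contact_edges n r p"
  shows "0 < r i" "0 < r j" "infnorm (p j - p i) = r i + r j"
proof -
  note ij = contact_edgesD[OF assms(2)]
  show pos: "0 < r i" "0 < r j"
    using assms(1) ij unfolding homothetic_packing_def by auto
  have "interior (hsq (r i) (p i)) \<inter> interior (hsq (r j) (p j)) = {}"
    using assms(1) ij unfolding homothetic_packing_def by auto
  then show "infnorm (p j - p i) = r i + r j"
    using touching_hsq_infnorm[OF pos ij(4)] by blast
qed

lemma edges_x_iff:
  "{i, j} \<in> edges_x n r p \<longleftrightarrow> {i, j} \<in> contact_edges n r p \<and>
     r i + r j = \<bar>fst (p i) - fst (p j)\<bar> \<and> \<bar>snd (p i) - snd (p j)\<bar> \<le> \<bar>fst (p i) - fst (p j)\<bar>"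
  unfolding edges_x_def
  by (auto simp: doubleton_eq_iff abs_minus_commute add.commute insert_commute)

lemma edges_y_iff:
  "{i, j} \<in> edges_y n r p \<longleftrightarrow> {i, j} \<in> contact_edges n r p \<and>
     r i + r j = \<bar>snd (p i) - snd (p j)\<bar> \<and> \<bar>fst (p i) - fst (p j)\<bar> \<le> \<bar>snd (p i) - snd (p j)\<bar>"
  unfolding edges_y_def
  by (auto simp: doubleton_eq_iff abs_minus_commute add.commute insert_commute)

theorem lemma11:
  fixes n :: nat and r :: "nat \<Rightarrow> real" and p :: "nat \<Rightarrow> real \<times> real" and i j :: nat
  assumes "homothetic_packing n r p"
    and "{i, j} \<in> contact_edges n r p"
  defines "pij \<equiv> (fst (p i) - r i * (fst (p i) - fst (p j)) / (r i + r j),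
                   snd (p i) - r i * (snd (p i) - snd (p j)) / (r i + r j))"
  shows "({t *\<^sub>R p i + (1 - t) *\<^sub>R p j | t. t \<in> {0..1}} \<subseteq> hsq (r i) (p i) \<union> hsq (r j) (p j)) \<and>
    ({t *\<^sub>R p i + (1 - t) *\<^sub>R p j | t. t \<in> {0..1}} - {pij}
           \<subseteq> interior (hsq (r i) (p i)) \<union> interior (hsq (r j) (p j))) \<and>
    (pij \<in> interior (hsq (r i) (p i) \<union> hsq (r j) (p j)) \<longleftrightarrow>
           {i, j} \<notin> edges_x n r p \<inter> edges_y n r p)"
proof -
  note r = contact_edge_infnorm[OF assms(1,2)]
  have segment: "{t *\<^sub>R p i + (1 - t) *\<^sub>R p j | t. t \<in> {0..1}} = closed_segment (p i) (p j)"
    unfolding closed_segment_commute[of "p i"] by (simp add: closed_segment_def add.commute)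
  have touch: "pij = touch_point (r i) (p i) (r j) (p j)"
    by (simp add: pij_def touch_point_def prod_eq_iff algebra_simps diff_divide_distrib)
  have corner: "{i, j} \<in> edges_x n r p \<inter> edges_y n r p \<longleftrightarrow>
      \<bar>fst (p j) - fst (p i)\<bar> = r i + r j \<and> \<bar>snd (p j) - snd (p i)\<bar> = r i + r j"
    using r(3) assms(2) by (cases "p i"; cases "p j")
      (auto simp: edges_x_iff edges_y_iff infnorm_Pair abs_minus_commute)
  show ?thesis
    unfolding segment touch corner
    using closed_segment_subset_hsq_Un[of "r i" "r j" "p j" "p i"]
      closed_segment_minus_touch_point_subset_interior[of "r i" "r j" "p j" "p i"]
      touch_point_in_interior_hsq_Un_iff[of "r i" "r j" "p j" "p i"] r
    by simp
qed

end
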